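(* Let $F=\begin{pmatrix}1&0&-1\\0&0&0\\-1&0&1\end{pmatrix}$ (edge detect A filter). Then the equation $F*X=B$ with the zero boundary condition, for unknown $X\in\mathbb{R}^{m\times n}$, has a unique solution for every $B\in\mathbb{R}^{m\times n}$ if and only if $m,n\notin\{2l-1: l\in\mathbb{N}\}$.
   Context: $\mathbb{N}=\{1,2,3,\dots\}$. For $F=[f_{ij}]\in\mathbb{R}^{3\times3}$ and $X=[x_{ij}]\in\mathbb{R}^{m\times n}$, the convolution $F*X\in\mathbb{R}^{m\times n}$ is defined by $[F*X]_{ij}=\sum_{l_1=1}^3\sum_{l_2=1}^3 f_{l_1l_2}\,x_{i-l_1+2,\,j-l_2+2}$ for $1\le i\le m$, $1\le j\le n$, where under the zero boundary condition all values $x_{ij}$ with $i\in\{0,m+1\}$ or $j\in\{0,n+1\}$ are $0$. *)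

theory Defs
  imports "HOL-Analysis.Analysis"
begin

text \<open>An m x n real matrix is represented as a function int => int => real whose
  entries with indices outside {1..m} x {1..n} are zero (zero boundary condition).
  A 3x3 filter is a function int => int => real, only the entries (1..3,1..3) are used.\<close>

definition mats :: "nat \<Rightarrow> nat \<Rightarrow> (int \<Rightarrow> int \<Rightarrow> real) set" where
  "mats m n = {X. \<forall>i j. \<not> (1 \<le> i \<and> i \<le> int m \<and> 1 \<le> j \<and> j \<le> int n) \<longrightarrow> X i j = 0}"

definition zext :: "nat \<Rightarrow> nat \<Rightarrow> (int \<Rightarrow> int \<Rightarrow> real) \<Rightarrow> int \<Rightarrow> int \<Rightarrow> real" where
  "zext m n X i j = (if 1 \<le> i \<and> i \<le> int m \<and> 1 \<le> j \<and> j \<le> int n then X i j else 0)"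

text \<open>[F*X]_ij = sum_{l1,l2=1..3} f_{l1 l2} x_{i-l1+2, j-l2+2} for 1<=i<=m, 1<=j<=n;
  zero outside the index range so that the result is again an m x n matrix.\<close>
definition conv :: "nat \<Rightarrow> nat \<Rightarrow> (int \<Rightarrow> int \<Rightarrow> real) \<Rightarrow> (int \<Rightarrow> int \<Rightarrow> real) \<Rightarrow> int \<Rightarrow> int \<Rightarrow> real" where
  "conv m n F X i j = (if 1 \<le> i \<and> i \<le> int m \<and> 1 \<le> j \<and> j \<le> int n
      then (\<Sum>l1\<in>{1..3}. \<Sum>l2\<in>{1..3}. F l1 l2 * zext m n X (i - l1 + 2) (j - l2 + 2))
      else 0)"

definition edgeA :: "int \<Rightarrow> int \<Rightarrow> real" where
  "edgeA l1 l2 = (if (l1 = 1 \<or> l1 = 3) \<and> (l2 = 1 \<or> l2 = 3) then (if l1 = l2 then 1 else -1) else 0)"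

end

theory Submission
  imports Defs
begin

text \<open>The edge detect A filter is the tensor product of the one-dimensional filter \<open>(1, 0, -1)\<close>
  with itself, so \<open>F * X = D\<^sub>m X D\<^sub>n\<^sup>T\<close>, where \<open>D\<^sub>k\<close> is the central difference
  \<open>(D\<^sub>k y) i = y (i + 1) - y (i - 1)\<close> on \<open>1 \<le> i \<le> k\<close> with boundary values \<open>y 0 = y (k + 1) = 0\<close>.
  The system \<open>D\<^sub>k y = b\<close> splits into one recurrence along the even and one along the odd
  indices. For even \<open>k\<close> each chain is anchored by exactly one boundary value, so \<open>D\<^sub>k\<close> is
  bijective, and hence so is \<open>X \<mapsto> F * X\<close>. For odd \<open>k\<close> the odd chain runs from \<open>y 1\<close> to
  \<open>y k\<close> without meeting a boundary value, so \<open>(1, 0, 1, \<dots>, 0, 1)\<close> lies in the kernel of \<open>D\<^sub>k\<close>,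
  and its tensor product with a nonzero vector lies in the kernel of \<open>X \<mapsto> F * X\<close>.\<close>

lemma bij_betw_iff_ex1:
  assumes "f ` A \<subseteq> B"
  shows "bij_betw f A B \<longleftrightarrow> (\<forall>b\<in>B. \<exists>!x. x \<in> A \<and> f x = b)"
proof
  assume "bij_betw f A B"
  then show "\<forall>b\<in>B. \<exists>!x. x \<in> A \<and> f x = b"
    unfolding bij_betw_def inj_on_def by auto
next
  assume ex1: "\<forall>b\<in>B. \<exists>!x. x \<in> A \<and> f x = b"
  have "inj_on f A"
    using assms ex1 by (auto simp: inj_on_def)
  moreover have "B \<subseteq> f ` A"
    using ex1 by blast
  ultimately show "bij_betw f A B"
    using assms by (auto simp: bij_betw_def)
qed

lemma mem_odd_numbers_iff: "(m::nat) \<in> {2 * l - 1 | l :: nat. l \<ge> 1} \<longleftrightarrow> odd m"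
proof
  assume "m \<in> {2 * l - 1 | l :: nat. l \<ge> 1}"
  then obtain l :: nat where "m = 2 * l - 1" "l \<ge> 1"
    by blast
  then show "odd m"
    by presburger
next
  assume "odd m"
  then have "m = 2 * ((m + 1) div 2) - 1" "(m + 1) div 2 \<ge> 1"
    by presburger+
  then show "m \<in> {2 * l - 1 | l :: nat. l \<ge> 1}"
    by blast
qed

definition vecs :: "nat \<Rightarrow> (int \<Rightarrow> real) set" where
  "vecs m = {y. \<forall>i. \<not> (1 \<le> i \<and> i \<le> int m) \<longrightarrow> y i = 0}"

definition central_diff :: "nat \<Rightarrow> (int \<Rightarrow> real) \<Rightarrow> int \<Rightarrow> real" where
  "central_diff m y i = (if 1 \<le> i \<and> i \<le> int m then y (i + 1) - y (i - 1) else 0)"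

lemma central_diff_in_vecs: "central_diff m y \<in> vecs m"
  by (simp add: vecs_def central_diff_def)

lemma central_diff_zero: "central_diff m (\<lambda>_. 0) = (\<lambda>_. 0)"
  by (simp add: central_diff_def fun_eq_iff)

lemma central_diff_diff:
  "central_diff m (\<lambda>i. y i - z i) = (\<lambda>i. central_diff m y i - central_diff m z i)"
  by (simp add: central_diff_def fun_eq_iff)

lemma central_diff_cong:
  assumes "\<And>i. 0 \<le> i \<Longrightarrow> i \<le> int m + 1 \<Longrightarrow> y i = z i"
  shows "central_diff m y = central_diff m z"
  using assms by (simp add: central_diff_def fun_eq_iff)

lemma central_diff_eq_0_periodic:
  assumes "central_diff m y = (\<lambda>_. 0)" "0 \<le> i" "i + 2 * int k \<le> int m + 1"
  shows "y (i + 2 * int k) = y i"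
  using assms(3)
proof (induction k)
  case (Suc k)
  have "central_diff m y (i + 2 * int k + 1) = 0"
    using assms(1) by simp
  then have "y (i + 2 * int k + 2) = y (i + 2 * int k)"
    using Suc.prems \<open>0 \<le> i\<close> by (simp add: central_diff_def algebra_simps split: if_splits)
  with Suc show ?case by (simp add: algebra_simps)
qed simp

lemma central_diff_kernel_even:
  assumes "even m" "y \<in> vecs m" "central_diff m y = (\<lambda>_. 0)"
  shows "y = (\<lambda>_. 0)"
proof
  fix i
  have boundary: "y 0 = 0" "y (int m + 1) = 0"
    using assms(2) by (simp_all add: vecs_def)
  show "y i = 0"
  proof (cases "0 \<le> i \<and> i \<le> int m + 1")
    case True
    show ?thesis
    proof (cases "even i")
      case True
      then have "i = 0 + 2 * int (nat (i div 2))"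
        using \<open>0 \<le> i \<and> i \<le> int m + 1\<close> by simp
      then show ?thesis
        using central_diff_eq_0_periodic[OF assms(3), of 0 "nat (i div 2)"]
          \<open>0 \<le> i \<and> i \<le> int m + 1\<close> boundary by simp
    next
      case False
      with \<open>even m\<close> have "int m + 1 = i + 2 * int (nat ((int m + 1 - i) div 2))"
        using \<open>0 \<le> i \<and> i \<le> int m + 1\<close> by simp
      then show ?thesis
        using central_diff_eq_0_periodic[OF assms(3), of i "nat ((int m + 1 - i) div 2)"]
          \<open>0 \<le> i \<and> i \<le> int m + 1\<close> boundary by simp
    qed
  qed (use assms(2) in \<open>auto simp: vecs_def\<close>)
qed

text \<open>\<open>alt_sum b\<close> solves \<open>y (i + 1) - y (i - 1) = b i\<close> for all \<open>i \<ge> 1\<close> and vanishes at \<open>0\<close>;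
  subtracting its value at \<open>m + 1\<close> on the odd indices keeps it a solution and, for even \<open>m\<close>,
  makes it vanish at \<open>m + 1\<close> as well.\<close>

definition alt_sum :: "(int \<Rightarrow> real) \<Rightarrow> int \<Rightarrow> real" where
  "alt_sum b i = (\<Sum>k | 1 \<le> k \<and> k < i \<and> odd (i - k). b k)"

lemma alt_sum_step:
  assumes "1 \<le> i"
  shows "alt_sum b (i + 1) = alt_sum b (i - 1) + b i"
proof -
  have "{k. 1 \<le> k \<and> k < i + 1 \<and> odd (i + 1 - k)} = insert i {k. 1 \<le> k \<and> k < i - 1 \<and> odd (i - 1 - k)}"
    using assms by auto presburger+
  moreover have "finite {k. 1 \<le> k \<and> k < i - 1 \<and> odd (i - 1 - k)}"
    by (rule finite_subset[of _ "{1..<i - 1}"]) auto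
  ultimately show ?thesis
    unfolding alt_sum_def by (simp add: add.commute)
qed

lemma central_diff_surj_even:
  assumes "even m" "b \<in> vecs m"
  shows "\<exists>y\<in>vecs m. central_diff m y = b"
proof -
  define z where "z i = alt_sum b i - (if odd i then alt_sum b (int m + 1) else 0)" for i
  define y where "y i = (if 1 \<le> i \<and> i \<le> int m then z i else 0)" for i
  have "alt_sum b 0 = 0"
    unfolding alt_sum_def by (rule sum.neutral) auto
  then have "z 0 = 0" "z (int m + 1) = 0"
    using \<open>even m\<close> by (simp_all add: z_def)
  then have "y i = z i" if "0 \<le> i" "i \<le> int m + 1" for i
    using that by (cases "i = 0 \<or> i = int m + 1") (auto simp: y_def)
  then have "central_diff m y = central_diff m z"
    by (rule central_diff_cong)
  also have "\<dots> = b"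
  proof
    fix i
    show "central_diff m z i = b i"
    proof (cases "1 \<le> i \<and> i \<le> int m")
      case True
      have "odd (i + 1) \<longleftrightarrow> odd (i - 1)"
        by presburger
      then show ?thesis
        using True alt_sum_step[of i b] by (simp add: central_diff_def z_def)
    next
      case False
      with assms(2) show ?thesis
        by (auto simp: central_diff_def vecs_def)
    qed
  qed
  finally have "central_diff m y = b" .
  moreover have "y \<in> vecs m"
    by (simp add: vecs_def y_def)
  ultimately show ?thesis
    by (rule bexI)
qed

lemma central_diff_bij_even:
  assumes "even m"
  shows "bij_betw (central_diff m) (vecs m) (vecs m)"
proof -
  have "inj_on (central_diff m) (vecs m)"
  proof (rule inj_onI)
    fix y z
    assume y: "y \<in> vecs m" and z: "z \<in> vecs m" and eq: "central_diff m y = central_diff m z"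
    have "(\<lambda>i. y i - z i) = (\<lambda>_. 0)"
    proof (rule central_diff_kernel_even[OF assms])
      show "(\<lambda>i. y i - z i) \<in> vecs m"
        using y z by (simp add: vecs_def)
      show "central_diff m (\<lambda>i. y i - z i) = (\<lambda>_. 0)"
        using eq by (simp add: central_diff_diff)
    qed
    then show "y = z"
      by (simp add: fun_eq_iff)
  qed
  moreover have "central_diff m ` vecs m = vecs m"
    using central_diff_surj_even[OF assms] central_diff_in_vecs by blast
  ultimately show ?thesis
    by (simp add: bij_betw_def)
qed

definition odd_indicator :: "nat \<Rightarrow> int \<Rightarrow> real" where
  "odd_indicator m i = (if 1 \<le> i \<and> i \<le> int m \<and> odd i then 1 else 0)"

lemma odd_indicator_in_vecs: "odd_indicator m \<in> vecs m"
  by (simp add: odd_indicator_def vecs_def)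

lemma central_diff_odd_indicator:
  assumes "odd m"
  shows "central_diff m (odd_indicator m) = (\<lambda>_. 0)"
proof -
  have "(1 \<le> i + 1 \<and> i + 1 \<le> int m \<and> odd (i + 1)) \<longleftrightarrow> (1 \<le> i - 1 \<and> i - 1 \<le> int m \<and> odd (i - 1))"
    if "1 \<le> i" "i \<le> int m" for i
    using that assms by presburger
  then show ?thesis
    by (auto simp: central_diff_def odd_indicator_def fun_eq_iff)
qed

definition rowwise ::
    "((int \<Rightarrow> real) \<Rightarrow> int \<Rightarrow> real) \<Rightarrow> (int \<Rightarrow> int \<Rightarrow> real) \<Rightarrow> int \<Rightarrow> int \<Rightarrow> real" where
  "rowwise \<phi> X = (\<lambda>i. \<phi> (X i))"

definition transpose_mat :: "(int \<Rightarrow> int \<Rightarrow> real) \<Rightarrow> int \<Rightarrow> int \<Rightarrow> real" where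
  "transpose_mat X = (\<lambda>j i. X i j)"

lemma mats_iff_rows:
  "X \<in> mats m n \<longleftrightarrow> (\<forall>i. X i \<in> vecs n) \<and> (\<forall>i. \<not> (1 \<le> i \<and> i \<le> int m) \<longrightarrow> X i = (\<lambda>_. 0))"
  by (auto simp: mats_def vecs_def fun_eq_iff)

lemma bij_betw_transpose_mat: "bij_betw transpose_mat (mats m n) (mats n m)"
  by (rule bij_betw_byWitness[where f' = transpose_mat]) (auto simp: transpose_mat_def mats_def)

lemma bij_betw_rowwise:
  assumes "bij_betw \<phi> (vecs n) (vecs n)" "\<phi> (\<lambda>_. 0) = (\<lambda>_. 0)"
  shows "bij_betw (rowwise \<phi>) (mats m n) (mats m n)"
proof (rule bij_betw_byWitness[where f' = "rowwise (inv_into (vecs n) \<phi>)"])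
  have zero: "(\<lambda>_. 0) \<in> vecs n"
    by (simp add: vecs_def)
  then have inv_zero: "inv_into (vecs n) \<phi> (\<lambda>_. 0) = (\<lambda>_. 0)"
    using assms by (simp add: bij_betw_def inv_into_f_eq)
  show "\<forall>X\<in>mats m n. rowwise (inv_into (vecs n) \<phi>) (rowwise \<phi> X) = X"
    using assms(1) by (auto simp: rowwise_def mats_iff_rows bij_betw_def)
  show "\<forall>X\<in>mats m n. rowwise \<phi> (rowwise (inv_into (vecs n) \<phi>) X) = X"
    using assms(1) by (auto simp: rowwise_def mats_iff_rows bij_betw_def f_inv_into_f)
  show "rowwise \<phi> ` mats m n \<subseteq> mats m n"
    using assms(2) bij_betw_apply[OF assms(1)] by (auto simp: rowwise_def mats_iff_rows)
  show "rowwise (inv_into (vecs n) \<phi>) ` mats m n \<subseteq> mats m n"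
    using assms(1) inv_zero by (auto simp: rowwise_def mats_iff_rows bij_betw_def inv_into_into)
qed

lemma conv_edgeA:
  assumes "X \<in> mats m n"
  shows "conv m n edgeA X i j = (if 1 \<le> i \<and> i \<le> int m \<and> 1 \<le> j \<and> j \<le> int n then
    X (i + 1) (j + 1) - X (i + 1) (j - 1) - X (i - 1) (j + 1) + X (i - 1) (j - 1) else 0)"
proof -
  have "zext m n X = X"
    using assms by (auto simp: zext_def mats_def fun_eq_iff)
  moreover have "{1..3::int} = {1, 2, 3}"
    by auto
  ultimately show ?thesis
    by (simp add: conv_def edgeA_def algebra_simps)
qed

lemma conv_edgeA_factorization:
  assumes "X \<in> mats m n"
  shows "conv m n edgeA X =
    transpose_mat (rowwise (central_diff m) (transpose_mat (rowwise (central_diff n) X)))"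
  using assms by (auto simp: conv_edgeA transpose_mat_def rowwise_def central_diff_def mats_def fun_eq_iff)

lemma tensor_in_mats: "u \<in> vecs m \<Longrightarrow> v \<in> vecs n \<Longrightarrow> (\<lambda>i j. u i * v j) \<in> mats m n"
  by (auto simp: mats_def vecs_def)

lemma conv_edgeA_tensor:
  assumes "u \<in> vecs m" "v \<in> vecs n"
  shows "conv m n edgeA (\<lambda>i j. u i * v j) = (\<lambda>i j. central_diff m u i * central_diff n v j)"
  using tensor_in_mats[OF assms] by (auto simp: conv_edgeA central_diff_def fun_eq_iff algebra_simps)

lemma conv_in_mats: "conv m n F X \<in> mats m n"
  by (simp add: conv_def mats_def)

lemma bij_betw_conv_edgeA:
  assumes "even m" "even n"
  shows "bij_betw (conv m n edgeA) (mats m n) (mats m n)"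
proof -
  have rows: "bij_betw (rowwise (central_diff n)) (mats m n) (mats m n)"
    by (intro bij_betw_rowwise central_diff_bij_even assms(2) central_diff_zero)
  have cols: "bij_betw (rowwise (central_diff m)) (mats n m) (mats n m)"
    by (intro bij_betw_rowwise central_diff_bij_even assms(1) central_diff_zero)
  have "bij_betw (transpose_mat \<circ> (rowwise (central_diff m) \<circ> (transpose_mat \<circ> rowwise (central_diff n))))
      (mats m n) (mats m n)"
    by (intro bij_betw_trans[OF bij_betw_trans[OF bij_betw_trans[OF rows bij_betw_transpose_mat] cols]]
        bij_betw_transpose_mat)
  then show ?thesis
    by (rule bij_betw_cong[THEN iffD2, rotated]) (simp add: conv_edgeA_factorization)
qed

lemma conv_edgeA_not_inj_on:
  assumes "m \<ge> 1" "n \<ge> 1" "odd m \<or> odd n"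
  shows "\<not> inj_on (conv m n edgeA) (mats m n)"
proof
  assume inj: "inj_on (conv m n edgeA) (mats m n)"
  define X where "X = (\<lambda>i j. odd_indicator m i * odd_indicator n j)"
  have X: "X \<in> mats m n"
    unfolding X_def by (intro tensor_in_mats odd_indicator_in_vecs)
  have "conv m n edgeA X = (\<lambda>i j. central_diff m (odd_indicator m) i * central_diff n (odd_indicator n) j)"
    unfolding X_def by (intro conv_edgeA_tensor odd_indicator_in_vecs)
  also have "\<dots> = (\<lambda>_ _. 0)"
    using assms(3) central_diff_odd_indicator by auto
  finally have conv_X: "conv m n edgeA X = (\<lambda>_ _. 0)" .
  have conv_zero: "conv m n edgeA (\<lambda>_ _. 0) = (\<lambda>_ _. 0)"
    by (simp add: conv_edgeA mats_def fun_eq_iff)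
  have zero: "(\<lambda>_ _. 0) \<in> mats m n"
    by (simp add: mats_def)
  have "X = (\<lambda>_ _. 0)"
    by (rule inj_onD[OF inj _ X zero]) (simp add: conv_X conv_zero)
  moreover have "X 1 1 = 1"
    using assms(1,2) by (simp add: X_def odd_indicator_def)
  ultimately show False
    by simp
qed

theorem corollary7:
  fixes m n :: nat
  assumes "m \<ge> 1" and "n \<ge> 1"
  shows "(\<forall>B\<in>mats m n. \<exists>!X. X \<in> mats m n \<and> conv m n edgeA X = B)
     \<longleftrightarrow> (m \<notin> {2 * l - 1 | l :: nat. l \<ge> 1} \<and> n \<notin> {2 * l - 1 | l :: nat. l \<ge> 1})"
proof -
  have "(\<forall>B\<in>mats m n. \<exists>!X. X \<in> mats m n \<and> conv m n edgeA X = B)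
      \<longleftrightarrow> bij_betw (conv m n edgeA) (mats m n) (mats m n)"
    by (rule bij_betw_iff_ex1[symmetric]) (auto intro: conv_in_mats)
  also have "\<dots> \<longleftrightarrow> even m \<and> even n"
  proof
    assume "bij_betw (conv m n edgeA) (mats m n) (mats m n)"
    then show "even m \<and> even n"
      using conv_edgeA_not_inj_on[OF assms] bij_betw_imp_inj_on by blast
  qed (simp add: bij_betw_conv_edgeA)
  finally show ?thesis
    by (simp only: mem_odd_numbers_iff not_not)
qed

end
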